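(* Let $m_1,m_2,m_3,m_4>0$, $M=\sum m_i$, and for $\mathbf{r}=(r_{12},r_{13},r_{14},r_{23},r_{24},r_{34})$ let $U(\mathbf{r})=\sum_{i<j}\frac{m_im_j}{r_{ij}}$, $I(\mathbf{r})=\frac{1}{2M}\sum_{i<j}m_im_jr_{ij}^2$, $P(\mathbf{r})=r_{12}r_{34}+r_{14}r_{23}-r_{13}r_{24}$, $\mathcal{M}^+=\{\mathbf{r}\in[0,\infty)^6: I(\mathbf{r})=1,\ P(\mathbf{r})=0\}$. If $\mathbf{r}^\ast\in\mathcal{M}^+$ is a critical point of $U|_{\mathcal{M}^+}$, then the Lagrange multiplier $\lambda$ is positive: $\lambda>0$.
   Context: Critical points of $U|_{\mathcal{M}^+}$ have all $r_{ij}>0$ and are characterized by the existence of Lagrange multipliers $\lambda,\sigma\in\mathbb{R}$ with $\nabla_{\mathbf{r}}\big(U+\lambda M(I-1)+\sigma P\big)=0$, i.e. $m_1m_2(r_{12}^{-3}-\lambda)=\sigma r_{34}/r_{12}$, $m_3m_4(r_{34}^{-3}-\lambda)=\sigma r_{12}/r_{34}$, $m_1m_3(r_{13}^{-3}-\lambda)=-\sigma r_{24}/r_{13}$, $m_2m_4(r_{24}^{-3}-\lambda)=-\sigma r_{13}/r_{24}$, $m_1m_4(r_{14}^{-3}-\lambda)=\sigma r_{23}/r_{14}$, $m_2m_3(r_{23}^{-3}-\lambda)=\sigma r_{14}/r_{23}$; the $\lambda$ in the claim is the multiplier in these equations. *)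

theory Defs
  imports Complex_Main
begin

definition totmass :: "real \<Rightarrow> real \<Rightarrow> real \<Rightarrow> real \<Rightarrow> real" where
  "totmass m1 m2 m3 m4 = m1 + m2 + m3 + m4"

definition potU :: "real \<Rightarrow> real \<Rightarrow> real \<Rightarrow> real \<Rightarrow>
    real \<Rightarrow> real \<Rightarrow> real \<Rightarrow> real \<Rightarrow> real \<Rightarrow> real \<Rightarrow> real" where
  "potU m1 m2 m3 m4 r12 r13 r14 r23 r24 r34 =
     m1*m2/r12 + m1*m3/r13 + m1*m4/r14 + m2*m3/r23 + m2*m4/r24 + m3*m4/r34"

definition momI :: "real \<Rightarrow> real \<Rightarrow> real \<Rightarrow> real \<Rightarrow>
    real \<Rightarrow> real \<Rightarrow> real \<Rightarrow> real \<Rightarrow> real \<Rightarrow> real \<Rightarrow> real" where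
  "momI m1 m2 m3 m4 r12 r13 r14 r23 r24 r34 =
     (m1*m2*r12^2 + m1*m3*r13^2 + m1*m4*r14^2 + m2*m3*r23^2 + m2*m4*r24^2 + m3*m4*r34^2)
     / (2 * totmass m1 m2 m3 m4)"

definition ptolP :: "real \<Rightarrow> real \<Rightarrow> real \<Rightarrow> real \<Rightarrow> real \<Rightarrow> real \<Rightarrow> real" where
  "ptolP r12 r13 r14 r23 r24 r34 = r12*r34 + r14*r23 - r13*r24"

text \<open>r is a critical point of U restricted to M+ with Lagrange multipliers lambda, sigma
  (the characterization given in the paper: all r_ij > 0, r in M+, and the gradient equations).\<close>
definition crit_lagrange :: "real \<Rightarrow> real \<Rightarrow> real \<Rightarrow> real \<Rightarrow>
    real \<Rightarrow> real \<Rightarrow> real \<Rightarrow> real \<Rightarrow> real \<Rightarrow> real \<Rightarrow> real \<Rightarrow> real \<Rightarrow> bool" where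
  "crit_lagrange m1 m2 m3 m4 r12 r13 r14 r23 r24 r34 lam sig \<longleftrightarrow>
     r12 > 0 \<and> r13 > 0 \<and> r14 > 0 \<and> r23 > 0 \<and> r24 > 0 \<and> r34 > 0 \<and>
     momI m1 m2 m3 m4 r12 r13 r14 r23 r24 r34 = 1 \<and>
     ptolP r12 r13 r14 r23 r24 r34 = 0 \<and>
     m1*m2*(1/r12^3 - lam) = sig * r34 / r12 \<and>
     m3*m4*(1/r34^3 - lam) = sig * r12 / r34 \<and>
     m1*m3*(1/r13^3 - lam) = - sig * r24 / r13 \<and>
     m2*m4*(1/r24^3 - lam) = - sig * r13 / r24 \<and>
     m1*m4*(1/r14^3 - lam) = sig * r23 / r14 \<and>
     m2*m3*(1/r23^3 - lam) = sig * r14 / r23"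

end

theory Submission
  imports Defs
begin

(* Euler's identity: U is homogeneous of degree -1 and I, P of degree 2, so pairing the
   Lagrange equations with r gives -U + 2 lambda M I + 2 sigma P = 0. On M+ this reads
   U = 2 M lambda, and U > 0. *)

lemma lagrange_equation_times_distance:
  fixes m r lam s b :: real
  assumes "r > 0" and "m * (1/r^3 - lam) = s * b / r"
  shows "m / r = lam * (m * r^2) + s * (b * r)"
proof -
  have "m / r - lam * (m * r^2) = m * (1/r^3 - lam) * r^2"
    using assms(1) by (simp add: field_simps power2_eq_square power3_eq_cube)
  also have "\<dots> = s * (b * r)"
    using assms by (simp add: power2_eq_square)
  finally show ?thesis by simp
qed

lemma crit_lagrange_potU_eq:
  assumes "crit_lagrange m1 m2 m3 m4 r12 r13 r14 r23 r24 r34 lam sig"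
  shows "potU m1 m2 m3 m4 r12 r13 r14 r23 r24 r34 = 2 * totmass m1 m2 m3 m4 * lam"
proof -
  note crit = assms[unfolded crit_lagrange_def]
  define S where "S = m1*m2*r12^2 + m1*m3*r13^2 + m1*m4*r14^2
                    + m2*m3*r23^2 + m2*m4*r24^2 + m3*m4*r34^2"
  have "m1*m2/r12 = lam * (m1*m2*r12^2) + sig * (r34*r12)"
    using crit lagrange_equation_times_distance[of r12 "m1*m2" lam sig r34] by simp
  moreover have "m3*m4/r34 = lam * (m3*m4*r34^2) + sig * (r12*r34)"
    using crit lagrange_equation_times_distance[of r34 "m3*m4" lam sig r12] by simp
  moreover have "m1*m3/r13 = lam * (m1*m3*r13^2) - sig * (r24*r13)"
    using crit lagrange_equation_times_distance[of r13 "m1*m3" lam "-sig" r24] by simp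
  moreover have "m2*m4/r24 = lam * (m2*m4*r24^2) - sig * (r13*r24)"
    using crit lagrange_equation_times_distance[of r24 "m2*m4" lam "-sig" r13] by simp
  moreover have "m1*m4/r14 = lam * (m1*m4*r14^2) + sig * (r23*r14)"
    using crit lagrange_equation_times_distance[of r14 "m1*m4" lam sig r23] by simp
  moreover have "m2*m3/r23 = lam * (m2*m3*r23^2) + sig * (r14*r23)"
    using crit lagrange_equation_times_distance[of r23 "m2*m3" lam sig r14] by simp
  ultimately have "potU m1 m2 m3 m4 r12 r13 r14 r23 r24 r34
                     = lam * S + 2 * sig * ptolP r12 r13 r14 r23 r24 r34"
    unfolding potU_def ptolP_def S_def by (simp only:) (simp add: algebra_simps)
  moreover have "ptolP r12 r13 r14 r23 r24 r34 = 0"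
    using crit by blast
  moreover have "S = 2 * totmass m1 m2 m3 m4"
    using crit by (simp add: momI_def S_def)
  ultimately show ?thesis by simp
qed

lemma potU_pos:
  assumes "m1 > 0" "m2 > 0" "m3 > 0" "m4 > 0"
    and "r12 > 0" "r13 > 0" "r14 > 0" "r23 > 0" "r24 > 0" "r34 > 0"
  shows "potU m1 m2 m3 m4 r12 r13 r14 r23 r24 r34 > 0"
  using assms unfolding potU_def by (simp add: add_pos_pos)

theorem lemma3:
  fixes m1 m2 m3 m4 r12 r13 r14 r23 r24 r34 lam sig :: real
  assumes "m1 > 0" "m2 > 0" "m3 > 0" "m4 > 0"
    and "crit_lagrange m1 m2 m3 m4 r12 r13 r14 r23 r24 r34 lam sig"
  shows "lam > 0"
proof -
  have "potU m1 m2 m3 m4 r12 r13 r14 r23 r24 r34 > 0"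
    using assms(5) unfolding crit_lagrange_def by (intro potU_pos[OF assms(1-4)]) blast+
  moreover have "totmass m1 m2 m3 m4 > 0"
    using assms(1-4) by (simp add: totmass_def)
  ultimately show ?thesis
    using crit_lagrange_potU_eq[OF assms(5)] by (simp add: zero_less_mult_iff)
qed

end
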